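(* Let $\phi:\mathbb{C}_{+}\to\mathbb{C}_{+}$ be a holomorphic map such that $\phi(\eta)=\eta$ for some $\eta\in\mathbb{C}_{+}$ and such that the composition operator $C_{\phi}f=f\circ\phi$ is bounded on $H^2(\mathbb{C}_{+})$. Then $C_{\phi}$ does not have the positive shadowing property on $H^2(\mathbb{C}_{+})$.
   Context: $\mathbb{C}_{+}=\{w\in\mathbb{C}:\mathrm{Re}(w)>0\}$. $H^2(\mathbb{C}_{+})$ is the Hardy space of holomorphic $f$ on $\mathbb{C}_{+}$ with finite norm $\|f\|_2^2=\sup_{0<x<\infty}\frac{1}{\pi}\int_{-\infty}^{\infty}|f(x+iy)|^2\,dy$. For an operator $T$ on a Banach space $X$ and $\delta>0$, a sequence $(x_n)_{n\in\mathbb{N}}\subset X$ is a $\delta$-pseudotrajectory if $\|Tx_n-x_{n+1}\|\le\delta$ for all $n$. $T$ has the positive shadowing property if for every $\epsilon>0$ there is $\delta>0$ such that for every $\delta$-pseudotrajectory $(x_n)_{n\in\mathbb{N}}$ there exists $x\in X$ with $\|T^nx-x_n\|\le\epsilon$ for all $n\in\mathbb{N}$. *)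

theory Defs
  imports "HOL-Analysis.Analysis"
begin

definition RHP :: "complex set" where
  "RHP = {w. Re w > 0}"

definition H2_sqnorm :: "(complex \<Rightarrow> complex) \<Rightarrow> ennreal" where
  "H2_sqnorm f = (SUP x\<in>{0<..}. (\<integral>\<^sup>+ y. ennreal ((cmod (f (Complex x y)))\<^sup>2) \<partial>lborel))
                  / ennreal pi"

definition H2 :: "(complex \<Rightarrow> complex) set" where
  "H2 = {f. f holomorphic_on RHP \<and> H2_sqnorm f < \<infinity>}"

definition H2_norm :: "(complex \<Rightarrow> complex) \<Rightarrow> real" where
  "H2_norm f = sqrt (enn2real (H2_sqnorm f))"

definition pseudotrajectory :: "'a::minus set \<Rightarrow> ('a \<Rightarrow> real) \<Rightarrow> ('a \<Rightarrow> 'a) \<Rightarrow> real \<Rightarrow> (nat \<Rightarrow> 'a) \<Rightarrow> bool" where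
  "pseudotrajectory X N T \<delta> xs \<longleftrightarrow> (\<forall>n. xs n \<in> X) \<and> (\<forall>n. N (T (xs n) - xs (Suc n)) \<le> \<delta>)"

definition positive_shadowing :: "'a::minus set \<Rightarrow> ('a \<Rightarrow> real) \<Rightarrow> ('a \<Rightarrow> 'a) \<Rightarrow> bool" where
  "positive_shadowing X N T \<longleftrightarrow>
     (\<forall>\<epsilon>>0. \<exists>\<delta>>0. \<forall>xs. pseudotrajectory X N T \<delta> xs \<longrightarrow>
        (\<exists>x\<in>X. \<forall>n. N ((T ^^ n) x - xs n) \<le> \<epsilon>))"

definition bounded_composition_H2 :: "(complex \<Rightarrow> complex) \<Rightarrow> bool" where
  "bounded_composition_H2 \<phi> \<longleftrightarrow> (\<forall>f\<in>H2. f \<circ> \<phi> \<in> H2) \<and>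
     (\<exists>M. \<forall>f\<in>H2. H2_norm (f \<circ> \<phi>) \<le> M * H2_norm f)"

end

(* Since phi fixes eta, every orbit of the composition operator has constant value at eta, whereas
   evaluation at eta is a bounded functional on H^2.  Starting from 0 and subtracting at each step a
   fixed v of norm at most delta with v(eta) ~= 0 gives a delta-pseudotrajectory whose value at eta
   is -n v(eta), so no orbit stays within distance 1 of it.

   Boundedness of evaluation at eta = p + iq comes from Cauchy's formula for f^2/(w - eta) on the
   rectangles [p - h, p + h] x [q - u, q + u].  The vertical sides are controlled by the H^2 norm
   directly; averaging over u in [h, 2h] turns the horizontal sides into an integral over the
   strip p - h <= Re w <= p + h, which Fubini's theorem bounds by the H^2 norm as well. *)

theory Submission
  imports Defs "HOL-Library.Function_Algebras" "HOL-Complex_Analysis.Complex_Analysis"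
    "HOL-Probability.Sinc_Integral"
begin

section \<open>Invariant bounded functionals obstruct shadowing\<close>

lemma pseudotrajectory_iterate_minus:
  fixes T :: "'a::ab_group_add \<Rightarrow> 'a"
  assumes "0 \<in> X" "\<And>x. x \<in> X \<Longrightarrow> T x \<in> X" "\<And>x y. x \<in> X \<Longrightarrow> y \<in> X \<Longrightarrow> x - y \<in> X"
    and "v \<in> X" "N v \<le> \<delta>"
  shows "pseudotrajectory X N T \<delta> (\<lambda>n. ((\<lambda>y. T y - v) ^^ n) 0)"
proof -
  have "((\<lambda>y. T y - v) ^^ n) 0 \<in> X" for n
    by (induction n) (simp_all add: assms)
  then show ?thesis
    using assms(5) by (simp add: pseudotrajectory_def)
qed

lemma invariant_functional_iterate_minus:
  fixes T :: "'a::ab_group_add \<Rightarrow> 'a" and L :: "'a \<Rightarrow> 'b::real_vector"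
  assumes "0 \<in> X" and T_closed: "\<And>x. x \<in> X \<Longrightarrow> T x \<in> X"
    and diff_closed: "\<And>x y. x \<in> X \<Longrightarrow> y \<in> X \<Longrightarrow> x - y \<in> X"
    and L_diff: "\<And>x y. x \<in> X \<Longrightarrow> y \<in> X \<Longrightarrow> L (x - y) = L x - L y"
    and L_T: "\<And>x. x \<in> X \<Longrightarrow> L (T x) = L x" and "v \<in> X"
  shows "L (((\<lambda>y. T y - v) ^^ n) 0) = - (of_nat n *\<^sub>R L v)"
proof (induction n)
  case 0
  show ?case
    using L_diff[OF \<open>0 \<in> X\<close> \<open>0 \<in> X\<close>] by simp
next
  case (Suc n)
  have "((\<lambda>y. T y - v) ^^ n) 0 \<in> X"
    by (induction n) (simp_all add: assms)
  then have "L (((\<lambda>y. T y - v) ^^ Suc n) 0) = L (((\<lambda>y. T y - v) ^^ n) 0) - L v"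
    by (simp add: L_diff T_closed L_T \<open>v \<in> X\<close>)
  then show ?case
    by (simp add: Suc.IH scaleR_add_left)
qed

lemma not_positive_shadowing_if_invariant_functional:
  fixes T :: "'a::ab_group_add \<Rightarrow> 'a" and L :: "'a \<Rightarrow> 'b::real_normed_vector"
  assumes zero: "0 \<in> X" and T_closed: "\<And>x. x \<in> X \<Longrightarrow> T x \<in> X"
    and diff_closed: "\<And>x y. x \<in> X \<Longrightarrow> y \<in> X \<Longrightarrow> x - y \<in> X"
    and L_diff: "\<And>x y. x \<in> X \<Longrightarrow> y \<in> X \<Longrightarrow> L (x - y) = L x - L y"
    and L_T: "\<And>x. x \<in> X \<Longrightarrow> L (T x) = L x"
    and L_bounded: "\<And>x. x \<in> X \<Longrightarrow> N x \<le> 1 \<Longrightarrow> norm (L x) \<le> C"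
    and small_vectors: "\<And>\<delta>. 0 < \<delta> \<Longrightarrow> \<exists>v\<in>X. N v \<le> \<delta> \<and> L v \<noteq> 0"
  shows "\<not> positive_shadowing X N T"
proof
  assume "positive_shadowing X N T"
  then obtain \<delta> where "0 < \<delta>" and shadow: "\<And>xs. pseudotrajectory X N T \<delta> xs \<Longrightarrow>
      \<exists>x\<in>X. \<forall>n. N ((T ^^ n) x - xs n) \<le> 1"
    unfolding positive_shadowing_def by (meson zero_less_one)
  then obtain v where v: "v \<in> X" "N v \<le> \<delta>" "L v \<noteq> 0"
    using small_vectors by blast
  define xs where "xs = (\<lambda>n. ((\<lambda>y. T y - v) ^^ n) 0)"
  have pseudo: "pseudotrajectory X N T \<delta> xs"
    unfolding xs_def using zero T_closed diff_closed v(1,2) by (rule pseudotrajectory_iterate_minus)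
  then have xs_in: "xs n \<in> X" for n
    by (simp add: pseudotrajectory_def)
  have L_xs: "L (xs n) = - (of_nat n *\<^sub>R L v)" for n
    unfolding xs_def using zero T_closed diff_closed L_diff L_T v(1)
    by (rule invariant_functional_iterate_minus)
  obtain x where x: "x \<in> X" and close: "\<And>n. N ((T ^^ n) x - xs n) \<le> 1"
    using shadow[OF pseudo] by blast
  have orbit_in: "(T ^^ n) x \<in> X" for n
    by (induction n) (simp_all add: x T_closed)
  have L_orbit: "L ((T ^^ n) x) = L x" for n
    by (induction n) (simp_all add: L_T orbit_in)
  have bounded: "real n * norm (L v) \<le> norm (L x) + C" for n
  proof -
    have "L ((T ^^ n) x - xs n) = L x + of_nat n *\<^sub>R L v"
      by (simp add: L_diff orbit_in xs_in L_orbit L_xs)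
    then have "real n * norm (L v) = norm (L ((T ^^ n) x - xs n) - L x)"
      by simp
    also have "\<dots> \<le> norm (L ((T ^^ n) x - xs n)) + norm (L x)"
      by (rule norm_triangle_ineq4)
    also have "\<dots> \<le> C + norm (L x)"
      using L_bounded[OF diff_closed[OF orbit_in xs_in] close] by simp
    finally show ?thesis by simp
  qed
  obtain n where "(norm (L x) + C) / norm (L v) < real n"
    using reals_Archimedean2 by blast
  with bounded[of n] v(3) show False
    by (simp add: pos_divide_less_eq)
qed

section \<open>Elementary properties of the Hardy space\<close>

lemma H2_sqnorm_eq:
  assumes "f \<in> H2" shows "H2_sqnorm f = ennreal ((H2_norm f)\<^sup>2)"
  using assms by (simp add: H2_def H2_norm_def ennreal_enn2real_if less_top[symmetric])

lemma H2_line_integral_le: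
  assumes "f \<in> H2" "0 < x"
  shows "(\<integral>\<^sup>+ y. ennreal ((cmod (f (Complex x y)))\<^sup>2) \<partial>lborel) \<le> ennreal (pi * (H2_norm f)\<^sup>2)"
proof -
  let ?S = "SUP x\<in>{0<..}. (\<integral>\<^sup>+ y. ennreal ((cmod (f (Complex x y)))\<^sup>2) \<partial>lborel)"
  have "(\<integral>\<^sup>+ y. ennreal ((cmod (f (Complex x y)))\<^sup>2) \<partial>lborel) \<le> ?S"
    using assms(2) by (intro SUP_upper) auto
  also have "?S = H2_sqnorm f * ennreal pi"
    unfolding H2_sqnorm_def by (simp add: ennreal_divide_times)
  also have "\<dots> = ennreal (pi * (H2_norm f)\<^sup>2)"
    using H2_sqnorm_eq[OF assms(1)] by (simp add: ennreal_mult'' mult.commute)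
  finally show ?thesis .
qed

lemma H2_continuous_on_compose:
  assumes "f \<in> H2" "continuous_on S p" "\<And>t. t \<in> S \<Longrightarrow> 0 < Re (p t)"
  shows "continuous_on S (\<lambda>t. f (p t))"
proof (rule continuous_on_compose2[OF _ assms(2)])
  show "continuous_on RHP f"
    using assms(1) by (auto simp: H2_def intro: holomorphic_on_imp_continuous_on)
  show "p ` S \<subseteq> RHP"
    using assms(3) by (auto simp: RHP_def)
qed

lemma H2_line_measurable:
  assumes "f \<in> H2" "0 < x"
  shows "(\<lambda>y. ennreal ((cmod (f (Complex x y)))\<^sup>2)) \<in> borel_measurable borel"
proof -
  have "continuous_on UNIV (\<lambda>y. f (Complex x y))"
    by (rule H2_continuous_on_compose[OF assms(1)])
       (use assms(2) in \<open>auto simp: Complex_eq intro!: continuous_intros\<close>)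
  then have "continuous_on UNIV (\<lambda>y. (cmod (f (Complex x y)))\<^sup>2)"
    by (intro continuous_intros)
  then have "(\<lambda>y. (cmod (f (Complex x y)))\<^sup>2) \<in> borel_measurable borel"
    by (rule borel_measurable_continuous_onI)
  then show ?thesis
    by measurable
qed

lemma zero_in_H2: "0 \<in> H2"
  by (simp add: H2_def H2_sqnorm_def zero_fun_def holomorphic_on_const)

lemma H2_uminus: "f \<in> H2 \<Longrightarrow> - f \<in> H2"
  by (auto simp: H2_def H2_sqnorm_def fun_Compl_def intro: holomorphic_intros)

lemma H2_of_line_integral_bound:
  assumes "f holomorphic_on RHP"
    and "\<And>x. 0 < x \<Longrightarrow> (\<integral>\<^sup>+ y. ennreal ((cmod (f (Complex x y)))\<^sup>2) \<partial>lborel) \<le> B"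
    and "B < \<infinity>"
  shows "f \<in> H2"
proof -
  have "H2_sqnorm f \<le> B / ennreal pi"
    unfolding H2_sqnorm_def using assms(2) by (intro divide_right_mono_ennreal SUP_least) auto
  also have "\<dots> < \<infinity>"
    using assms(3) by (simp add: ennreal_divide_eq_top_iff less_top[symmetric])
  finally show ?thesis
    using assms(1) by (simp add: H2_def)
qed

lemma H2_add:
  assumes "f \<in> H2" "g \<in> H2"
  shows "f + g \<in> H2"
proof (rule H2_of_line_integral_bound[where B = "2 * ennreal (pi * (H2_norm f)\<^sup>2) + 2 * ennreal (pi * (H2_norm g)\<^sup>2)"])
  show "(f + g) holomorphic_on RHP"
    using assms unfolding H2_def plus_fun_def by (auto intro: holomorphic_intros)
  fix x :: real
  assume "0 < x"
  have pointwise: "ennreal ((cmod ((f + g) w))\<^sup>2) \<le> 2 * ennreal ((cmod (f w))\<^sup>2) + 2 * ennreal ((cmod (g w))\<^sup>2)"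
    for w
  proof -
    have "(cmod (f w + g w))\<^sup>2 \<le> (cmod (f w) + cmod (g w))\<^sup>2"
      by (intro power_mono norm_triangle_ineq) simp
    also have "\<dots> \<le> 2 * (cmod (f w))\<^sup>2 + 2 * (cmod (g w))\<^sup>2"
      using sum_squares_bound[of "cmod (f w)" "cmod (g w)"] by (simp add: power2_sum)
    finally have "ennreal ((cmod ((f + g) w))\<^sup>2) \<le> ennreal (2 * (cmod (f w))\<^sup>2 + 2 * (cmod (g w))\<^sup>2)"
      unfolding plus_fun_def by (rule ennreal_leI)
    also have "\<dots> = 2 * ennreal ((cmod (f w))\<^sup>2) + 2 * ennreal ((cmod (g w))\<^sup>2)"
      by (simp add: ennreal_plus ennreal_mult)
    finally show ?thesis .
  qed
  have "(\<integral>\<^sup>+ y. ennreal ((cmod ((f + g) (Complex x y)))\<^sup>2) \<partial>lborel)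
      \<le> (\<integral>\<^sup>+ y. 2 * ennreal ((cmod (f (Complex x y)))\<^sup>2) + 2 * ennreal ((cmod (g (Complex x y)))\<^sup>2) \<partial>lborel)"
    by (intro nn_integral_mono pointwise)
  also have "\<dots> = 2 * (\<integral>\<^sup>+ y. ennreal ((cmod (f (Complex x y)))\<^sup>2) \<partial>lborel)
      + 2 * (\<integral>\<^sup>+ y. ennreal ((cmod (g (Complex x y)))\<^sup>2) \<partial>lborel)"
    using H2_line_measurable[OF assms(1) \<open>0 < x\<close>] H2_line_measurable[OF assms(2) \<open>0 < x\<close>]
    by (simp add: nn_integral_add nn_integral_cmult)
  also have "\<dots> \<le> 2 * ennreal (pi * (H2_norm f)\<^sup>2) + 2 * ennreal (pi * (H2_norm g)\<^sup>2)"
    using H2_line_integral_le[OF assms(1) \<open>0 < x\<close>] H2_line_integral_le[OF assms(2) \<open>0 < x\<close>]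
    by (intro add_mono mult_left_mono) auto
  finally show "(\<integral>\<^sup>+ y. ennreal ((cmod ((f + g) (Complex x y)))\<^sup>2) \<partial>lborel)
      \<le> 2 * ennreal (pi * (H2_norm f)\<^sup>2) + 2 * ennreal (pi * (H2_norm g)\<^sup>2)" .
qed (simp add: ennreal_mult_less_top)

lemma H2_diff: "f \<in> H2 \<Longrightarrow> g \<in> H2 \<Longrightarrow> f - g \<in> H2"
  unfolding diff_conv_add_uminus by (intro H2_add H2_uminus)

lemma H2_cmult:
  assumes "f \<in> H2"
  shows "(\<lambda>w. c * f w) \<in> H2" and "H2_norm (\<lambda>w. c * f w) = cmod c * H2_norm f"
proof -
  have line_eq: "(\<integral>\<^sup>+ y. ennreal ((cmod (c * f (Complex x y)))\<^sup>2) \<partial>lborel)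
      = ennreal ((cmod c)\<^sup>2) * (\<integral>\<^sup>+ y. ennreal ((cmod (f (Complex x y)))\<^sup>2) \<partial>lborel)"
    if "x \<in> {0<..}" for x
    using H2_line_measurable[OF assms, of x] that
    by (simp add: norm_mult power_mult_distrib ennreal_mult nn_integral_cmult)
  have "H2_sqnorm (\<lambda>w. c * f w) = ennreal ((cmod c)\<^sup>2) * H2_sqnorm f"
    unfolding H2_sqnorm_def by (simp add: line_eq SUP_mult_left_ennreal ennreal_times_divide)
  also have "\<dots> = ennreal ((cmod c * H2_norm f)\<^sup>2)"
    by (simp add: H2_sqnorm_eq[OF assms] ennreal_mult power_mult_distrib)
  finally have sq: "H2_sqnorm (\<lambda>w. c * f w) = ennreal ((cmod c * H2_norm f)\<^sup>2)" .
  then show "(\<lambda>w. c * f w) \<in> H2"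
    using assms by (auto simp: H2_def intro: holomorphic_intros)
  show "H2_norm (\<lambda>w. c * f w) = cmod c * H2_norm f"
    unfolding H2_norm_def[of "\<lambda>w. c * f w"] sq by (simp add: H2_norm_def)
qed

lemma inverse_add_one_in_H2: "(\<lambda>w. 1 / (w + 1)) \<in> H2"
proof (rule H2_of_line_integral_bound[where B = "\<integral>\<^sup>+ y. ennreal (inverse (1 + y\<^sup>2)) \<partial>lborel"])
  show "(\<lambda>w. 1 / (w + 1)) holomorphic_on RHP"
    by (intro holomorphic_intros) (auto simp: RHP_def complex_eq_iff)
  have "integrable lborel (\<lambda>y::real. inverse (1 + y\<^sup>2))"
    using integrable_inverse_1_plus_square by (simp add: set_integrable_def)
  then show "(\<integral>\<^sup>+ y. ennreal (inverse (1 + y\<^sup>2)) \<partial>lborel) < \<infinity>"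
    by (simp add: integrable_iff_bounded add_pos_nonneg)
  fix x :: real
  assume "0 < x"
  show "(\<integral>\<^sup>+ y. ennreal ((cmod (1 / (Complex x y + 1)))\<^sup>2) \<partial>lborel)
      \<le> (\<integral>\<^sup>+ y. ennreal (inverse (1 + y\<^sup>2)) \<partial>lborel)"
  proof (intro nn_integral_mono ennreal_leI)
    fix y
    have "1 \<le> (x + 1)\<^sup>2"
      using \<open>0 < x\<close> by (intro one_le_power) simp
    then have "inverse ((x + 1)\<^sup>2 + y\<^sup>2) \<le> inverse (1 + y\<^sup>2)"
      by (intro le_imp_inverse_le) (auto intro: add_pos_nonneg)
    moreover have "(cmod (Complex x y + 1))\<^sup>2 = (x + 1)\<^sup>2 + y\<^sup>2"
      by (simp add: cmod_def Complex_eq)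
    ultimately show "(cmod (1 / (Complex x y + 1)))\<^sup>2 \<le> inverse (1 + y\<^sup>2)"
      by (simp add: norm_divide power_one_over inverse_eq_divide)
  qed
qed

lemma H2_small_nonvanishing:
  assumes "0 < \<delta>" "0 < Re z"
  shows "\<exists>v\<in>H2. H2_norm v \<le> \<delta> \<and> v z \<noteq> 0"
proof -
  define c where "c = \<delta> / (H2_norm (\<lambda>w. 1 / (w + 1)) + 1)"
  have "0 \<le> H2_norm (\<lambda>w. 1 / (w + 1))"
    by (simp add: H2_norm_def)
  then have c: "0 < c" "c * H2_norm (\<lambda>w. 1 / (w + 1)) \<le> \<delta>"
    using assms(1) by (auto simp: c_def field_simps)
  have "z + 1 \<noteq> 0"
    using assms(2) by (auto simp: complex_eq_iff)
  then show ?thesis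
    using H2_cmult[OF inverse_add_one_in_H2, of "complex_of_real c"] c
    by (intro bexI[of _ "\<lambda>w. complex_of_real c * (1 / (w + 1))"]) auto
qed

section \<open>Cauchy estimates on rectangles\<close>

lemma has_contour_integral_linepath_same_Im_iff:
  assumes "Im z = c" "Im z' = c" "Re z = a" "Re z' = b" "a < b"
  shows   "(f has_contour_integral I) (linepath z z') \<longleftrightarrow>
             ((\<lambda>x. f (Complex x c)) has_integral I) {a..b}"
proof -
  have "(f has_contour_integral I) (linepath z z') \<longleftrightarrow>
          ((\<lambda>x. f (linepath z z' x) * (z' - z)) has_integral I) {0..1}"
    by (subst has_contour_integral_linepath) simp_all
  also have "\<dots> \<longleftrightarrow> ((\<lambda>x. f (Complex (a + (b - a) * x) c) * of_real (b - a)) has_integral I) {0..1}"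
  proof -
    have "linepath z z' x = Complex (a + (b - a) * x) c" for x
      using assms by (simp add: linepath_def complex_eq_iff algebra_simps)
    moreover have "z' - z = of_real (b - a)"
      using assms by (simp add: complex_eq_iff)
    ultimately show ?thesis
      by simp
  qed
  also have "{0..1} = (\<lambda>x. x / (b - a)) ` {0..b-a}"
    using assms by simp
  also have "((\<lambda>x. f (Complex (a + (b - a) * x) c) * of_real (b - a)) has_integral I) \<dots> \<longleftrightarrow>
             ((\<lambda>x. f (Complex (a + x) c) * of_real (b - a)) has_integral ((b-a) *\<^sub>R I)) {0..b-a}"
    by (subst has_integral_stretch_real_iff) (use assms in simp_all)
  also have "\<dots> \<longleftrightarrow> ((\<lambda>x. of_real (b-a) * (f (Complex x c))) has_integral (b-a) *\<^sub>R I) {a..b}"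
    by (subst has_integral_shift_real_ivl_iff[where c = "-a"])
       (simp_all add: scaleR_conv_of_real mult_ac)
  also have "\<dots> \<longleftrightarrow> ((\<lambda>x. f (Complex x c)) has_integral I) {a..b}"
    by (subst has_integral_mult_right_iff) (use assms in \<open>auto simp: scaleR_conv_of_real\<close>)
  finally show ?thesis .
qed

lemma norm_has_integral_le_integral:
  fixes G :: "real \<Rightarrow> 'a::banach"
  assumes "(G has_integral I) {a..b}" "continuous_on {a..b} K"
    and "\<And>t. t \<in> {a..b} \<Longrightarrow> norm (G t) \<le> K t"
  shows "norm I \<le> integral {a..b} K"
  using integral_norm_bound_integral[OF has_integral_integrable[OF assms(1)]
      integrable_continuous_interval[OF assms(2)] assms(3)]
    integral_unique[OF assms(1)] by simp

lemma norm_Cauchy_kernel_le: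
  assumes "0 < h" "h \<le> cmod (w - z)"
  shows "cmod (g w / (w - z)) \<le> cmod (g w) / h"
  using assms by (simp add: norm_divide frac_le)

lemma Cauchy_kernel_horizontal_side_le:
  assumes I: "((\<lambda>w. g w / (w - z)) has_contour_integral I) (linepath (Complex a y) (Complex b y))"
    and "a < b" "0 < h" "h \<le> \<bar>y - Im z\<bar>"
    and cont: "continuous_on {a..b} (\<lambda>x. g (Complex x y))"
  shows "h * cmod I \<le> integral {a..b} (\<lambda>x. cmod (g (Complex x y)))"
proof -
  have "((\<lambda>x. g (Complex x y) / (Complex x y - z)) has_integral I) {a..b}"
    using I has_contour_integral_linepath_same_Im_iff[of _ y _ a b] \<open>a < b\<close> by simp
  then have "cmod I \<le> integral {a..b} (\<lambda>x. cmod (g (Complex x y)) / h)"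
  proof (rule norm_has_integral_le_integral)
    show "continuous_on {a..b} (\<lambda>x. cmod (g (Complex x y)) / h)"
      using cont \<open>0 < h\<close> by (intro continuous_intros) auto
    fix x
    have "h \<le> cmod (Complex x y - z)"
      using abs_Im_le_cmod[of "Complex x y - z"] assms(4) by simp
    then show "cmod (g (Complex x y) / (Complex x y - z)) \<le> cmod (g (Complex x y)) / h"
      using norm_Cauchy_kernel_le \<open>0 < h\<close> by blast
  qed
  then show ?thesis
    using \<open>0 < h\<close> by (simp add: pos_le_divide_eq mult.commute)
qed

lemma Cauchy_kernel_vertical_side_le:
  assumes I: "((\<lambda>w. g w / (w - z)) has_contour_integral I) (linepath (Complex x a) (Complex x b))"
    and "a < b" "0 < h" "h \<le> \<bar>x - Re z\<bar>"
    and cont: "continuous_on {a..b} (\<lambda>y. g (Complex x y))"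
  shows "h * cmod I \<le> integral {a..b} (\<lambda>y. cmod (g (Complex x y)))"
proof -
  have "((\<lambda>y. g (Complex x y) / (Complex x y - z)) has_integral (- \<i> * I)) {a..b}"
    using I has_contour_integral_linepath_same_Re_iff[of _ x _ a b] \<open>a < b\<close> by simp
  then have "cmod (- \<i> * I) \<le> integral {a..b} (\<lambda>y. cmod (g (Complex x y)) / h)"
  proof (rule norm_has_integral_le_integral)
    show "continuous_on {a..b} (\<lambda>y. cmod (g (Complex x y)) / h)"
      using cont \<open>0 < h\<close> by (intro continuous_intros) auto
    fix y
    have "h \<le> cmod (Complex x y - z)"
      using abs_Re_le_cmod[of "Complex x y - z"] assms(4) by simp
    then show "cmod (g (Complex x y) / (Complex x y - z)) \<le> cmod (g (Complex x y)) / h"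
      using norm_Cauchy_kernel_le \<open>0 < h\<close> by blast
  qed
  then show ?thesis
    using \<open>0 < h\<close> by (simp add: norm_mult pos_le_divide_eq mult.commute)
qed

lemma Cauchy_integral_formula_rectangle_sides:
  assumes holo: "g holomorphic_on S" and "convex S" "open S"
    and rect: "cbox (Complex x1 y1) (Complex x2 y2) \<subseteq> S"
    and z: "z \<in> box (Complex x1 y1) (Complex x2 y2)"
  obtains I1 I2 I3 I4 where
    "((\<lambda>w. g w / (w - z)) has_contour_integral I1) (linepath (Complex x1 y1) (Complex x2 y1))"
    "((\<lambda>w. g w / (w - z)) has_contour_integral I2) (linepath (Complex x2 y1) (Complex x2 y2))"
    "((\<lambda>w. g w / (w - z)) has_contour_integral I3) (linepath (Complex x2 y2) (Complex x1 y2))"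
    "((\<lambda>w. g w / (w - z)) has_contour_integral I4) (linepath (Complex x1 y2) (Complex x1 y1))"
    "2 * pi * \<i> * g z = I1 + I2 + I3 + I4"
proof -
  define a1 a2 a3 a4 where "a1 = Complex x1 y1" "a2 = Complex x2 y1" "a3 = Complex x2 y2" "a4 = Complex x1 y2"
  define F where "F = (\<lambda>w. g w / (w - z))"
  have boundary: "path_image (rectpath a1 a3) = cbox a1 a3 - box a1 a3"
    using z by (intro path_image_rectpath_cbox_minus_box) (auto simp: a1_a2_a3_a4_def in_box_complex_iff)
  have "(F has_contour_integral (2 * pi * \<i> * winding_number (rectpath a1 a3) z * g z)) (rectpath a1 a3)"
    unfolding F_def
  proof (rule Cauchy_integral_formula_convex_simple[OF \<open>convex S\<close> holo])
    show "z \<in> interior S"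
      using z rect box_subset_cbox interior_open[OF \<open>open S\<close>] by (auto simp: a1_a2_a3_a4_def)
    show "path_image (rectpath a1 a3) \<subseteq> S - {z}"
      using boundary rect z by (auto simp: a1_a2_a3_a4_def)
  qed auto
  then have total: "(F has_contour_integral (2 * pi * \<i> * g z)) (rectpath a1 a3)"
    using winding_number_rectpath z by (simp add: a1_a2_a3_a4_def)
  have "continuous_on (cbox a1 a3) g"
    using holo rect unfolding a1_a2_a3_a4_def
    by (meson holomorphic_on_imp_continuous_on holomorphic_on_subset)
  then have F_cont: "continuous_on (path_image (rectpath a1 a3)) F"
    unfolding F_def boundary using z
    by (intro continuous_intros) (auto simp: a1_a2_a3_a4_def elim: continuous_on_subset)
  have rectpath: "rectpath a1 a3 = linepath a1 a2 +++ linepath a2 a3 +++ linepath a3 a4 +++ linepath a4 a1"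
    by (simp add: rectpath_def Let_def a1_a2_a3_a4_def)
  have side: "(F has_contour_integral contour_integral (linepath a b) F) (linepath a b)"
    if "closed_segment a b \<subseteq> path_image (rectpath a1 a3)" for a b
    using F_cont that
    by (intro has_contour_integral_integral contour_integrable_continuous_linepath)
       (auto elim: continuous_on_subset)
  have sides: "(F has_contour_integral contour_integral (linepath a1 a2) F) (linepath a1 a2)"
    "(F has_contour_integral contour_integral (linepath a2 a3) F) (linepath a2 a3)"
    "(F has_contour_integral contour_integral (linepath a3 a4) F) (linepath a3 a4)"
    "(F has_contour_integral contour_integral (linepath a4 a1) F) (linepath a4 a1)"
    by (auto intro!: side simp: rectpath path_image_join)
  have "(F has_contour_integral (contour_integral (linepath a1 a2) F + (contour_integral (linepath a2 a3) F
      + (contour_integral (linepath a3 a4) F + contour_integral (linepath a4 a1) F)))) (rectpath a1 a3)"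
    unfolding rectpath by (intro has_contour_integral_join valid_path_join sides) auto
  with has_contour_integral_unique[OF total] sides show thesis
    by (intro that[unfolded F_def[symmetric]]) (auto simp: a1_a2_a3_a4_def add.assoc)
qed

lemma Cauchy_rectangle_estimate:
  assumes holo: "g holomorphic_on S" and "convex S" "open S"
    and rect: "cbox (Complex x1 y1) (Complex x2 y2) \<subseteq> S"
    and "0 < h" "x1 + h \<le> Re z" "Re z + h \<le> x2" "y1 + h \<le> Im z" "Im z + h \<le> y2"
  shows "2 * pi * h * cmod (g z) \<le>
      integral {x1..x2} (\<lambda>x. cmod (g (Complex x y1))) + integral {x1..x2} (\<lambda>x. cmod (g (Complex x y2)))
    + integral {y1..y2} (\<lambda>y. cmod (g (Complex x1 y))) + integral {y1..y2} (\<lambda>y. cmod (g (Complex x2 y)))"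
proof -
  have z: "z \<in> box (Complex x1 y1) (Complex x2 y2)"
    using assms by (auto simp: in_box_complex_iff)
  obtain I1 I2 I3 I4 where sides:
    "((\<lambda>w. g w / (w - z)) has_contour_integral I1) (linepath (Complex x1 y1) (Complex x2 y1))"
    "((\<lambda>w. g w / (w - z)) has_contour_integral I2) (linepath (Complex x2 y1) (Complex x2 y2))"
    "((\<lambda>w. g w / (w - z)) has_contour_integral I3) (linepath (Complex x2 y2) (Complex x1 y2))"
    "((\<lambda>w. g w / (w - z)) has_contour_integral I4) (linepath (Complex x1 y2) (Complex x1 y1))"
    and sum: "2 * pi * \<i> * g z = I1 + I2 + I3 + I4"
    using Cauchy_integral_formula_rectangle_sides[OF holo \<open>convex S\<close> \<open>open S\<close> rect z] by blast
  have cont: "continuous_on (cbox (Complex x1 y1) (Complex x2 y2)) g"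
    using holo rect by (meson holomorphic_on_imp_continuous_on holomorphic_on_subset)
  have horizontal: "continuous_on {x1..x2} (\<lambda>x. g (Complex x y))" if "y \<in> {y1..y2}" for y
    by (rule continuous_on_compose2[OF cont])
       (use that in \<open>auto simp: in_cbox_complex_iff Complex_eq intro!: continuous_intros\<close>)
  have vertical: "continuous_on {y1..y2} (\<lambda>y. g (Complex x y))" if "x \<in> {x1..x2}" for x
    by (rule continuous_on_compose2[OF cont])
       (use that in \<open>auto simp: in_cbox_complex_iff Complex_eq intro!: continuous_intros\<close>)
  have "2 * pi * h * cmod (g z) = h * cmod (I1 + I2 + I3 + I4)"
    by (simp flip: sum add: norm_mult)
  also have "\<dots> \<le> h * cmod I1 + h * cmod (- I3) + h * cmod (- I4) + h * cmod I2"
    using \<open>0 < h\<close> norm_triangle_le[of "I1 + I2 + I3" "I4"] norm_triangle_le[of "I1 + I2" "I3"]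
      norm_triangle_ineq[of I1 I2]
    by (simp add: distrib_left[symmetric] mult_left_mono)
  also have "\<dots> \<le> integral {x1..x2} (\<lambda>x. cmod (g (Complex x y1))) + integral {x1..x2} (\<lambda>x. cmod (g (Complex x y2)))
    + integral {y1..y2} (\<lambda>y. cmod (g (Complex x1 y))) + integral {y1..y2} (\<lambda>y. cmod (g (Complex x2 y)))"
    using has_contour_integral_reverse_linepath[OF sides(3)] has_contour_integral_reverse_linepath[OF sides(4)]
      sides(1,2) assms horizontal vertical
    by (intro add_mono Cauchy_kernel_horizontal_side_le[where z = z] Cauchy_kernel_vertical_side_le[where z = z])
       auto
  finally show ?thesis .
qed

section \<open>Boundedness of point evaluation\<close>

lemma set_nn_integral_interval_eq_integral:
  fixes K :: "real \<Rightarrow> real"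
  assumes "continuous_on {a..b} K" "\<And>x. x \<in> {a..b} \<Longrightarrow> 0 \<le> K x"
  shows "(\<integral>\<^sup>+x\<in>{a..b}. ennreal (K x) \<partial>lborel) = ennreal (integral {a..b} K)"
  using assms by (intro nn_integral_has_integral_lebesgue' integrable_integral integrable_continuous_interval)

lemma H2_strip_measurable:
  assumes f: "f \<in> H2" and "0 < a"
  shows "(\<lambda>(x, y). ennreal ((cmod (f (Complex x y)))\<^sup>2) * indicator {a..b} x)
    \<in> borel_measurable (lborel \<Otimes>\<^sub>M lborel)"
proof -
  have "continuous_on ({a..b} \<times> UNIV) (\<lambda>z. (cmod (f (Complex (fst z) (snd z))))\<^sup>2)"
    using \<open>0 < a\<close> by (intro continuous_intros H2_continuous_on_compose[OF f])
      (auto simp: Complex_eq intro!: continuous_intros)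
  then have "(\<lambda>z. indicator ({a..b} \<times> UNIV) z *\<^sub>R (cmod (f (Complex (fst z) (snd z))))\<^sup>2)
      \<in> borel_measurable borel"
    by (intro borel_measurable_continuous_on_indicator borel_closed closed_Times) auto
  then have "(\<lambda>z. ennreal (indicator ({a..b} \<times> UNIV) z *\<^sub>R (cmod (f (Complex (fst z) (snd z))))\<^sup>2))
      \<in> borel_measurable borel"
    by measurable
  moreover have "(\<lambda>(x, y). ennreal ((cmod (f (Complex x y)))\<^sup>2) * indicator {a..b} x)
      = (\<lambda>z. ennreal (indicator ({a..b} \<times> UNIV) z *\<^sub>R (cmod (f (Complex (fst z) (snd z))))\<^sup>2))"
    by (auto simp: fun_eq_iff indicator_def)
  ultimately show ?thesis
    by (simp add: lborel_prod)
qed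

lemma H2_strip_integral:
  assumes f: "f \<in> H2" and "0 < a" "a \<le> b"
  defines "G \<equiv> \<lambda>y. \<integral>\<^sup>+x\<in>{a..b}. ennreal ((cmod (f (Complex x y)))\<^sup>2) \<partial>lborel"
  shows "G \<in> borel_measurable borel"
    and "(\<integral>\<^sup>+y. G y \<partial>lborel) \<le> ennreal ((b - a) * (pi * (H2_norm f)\<^sup>2))"
proof -
  define \<Phi> where "\<Phi> x y = ennreal ((cmod (f (Complex x y)))\<^sup>2) * indicator {a..b} x" for x y
  have \<Phi>_measurable: "case_prod \<Phi> \<in> borel_measurable (lborel \<Otimes>\<^sub>M lborel)"
    unfolding \<Phi>_def by (rule H2_strip_measurable[OF f \<open>0 < a\<close>])
  then have "case_prod (\<lambda>y x. \<Phi> x y) \<in> borel_measurable (lborel \<Otimes>\<^sub>M lborel)"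
    by (subst measurable_pair_swap_iff) simp
  then have "(\<lambda>y. \<integral>\<^sup>+x. \<Phi> x y \<partial>lborel) \<in> borel_measurable lborel"
    by (rule lborel.borel_measurable_nn_integral)
  then show "G \<in> borel_measurable borel"
    by (simp add: G_def \<Phi>_def)
  have "(\<integral>\<^sup>+y. G y \<partial>lborel) = (\<integral>\<^sup>+x. (\<integral>\<^sup>+y. \<Phi> x y \<partial>lborel) \<partial>lborel)"
    unfolding G_def \<Phi>_def by (rule lborel_pair.Fubini'[OF \<Phi>_measurable[unfolded \<Phi>_def]])
  also have "\<dots> \<le> (\<integral>\<^sup>+x. ennreal (pi * (H2_norm f)\<^sup>2) * indicator {a..b} x \<partial>lborel)"
  proof (intro nn_integral_mono)
    fix x
    show "(\<integral>\<^sup>+y. \<Phi> x y \<partial>lborel) \<le> ennreal (pi * (H2_norm f)\<^sup>2) * indicator {a..b} x"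
      using H2_line_integral_le[OF f, of x] \<open>0 < a\<close> by (auto simp: \<Phi>_def indicator_def)
  qed
  also have "\<dots> = ennreal (pi * (H2_norm f)\<^sup>2) * ennreal (b - a)"
    using \<open>a \<le> b\<close> by (subst nn_integral_cmult_indicator) auto
  also have "\<dots> = ennreal ((b - a) * (pi * (H2_norm f)\<^sup>2))"
    using \<open>a \<le> b\<close> by (simp add: mult.commute flip: ennreal_mult)
  finally show "(\<integral>\<^sup>+y. G y \<partial>lborel) \<le> ennreal ((b - a) * (pi * (H2_norm f)\<^sup>2))" .
qed

lemma H2_vertical_segment_integral_le:
  assumes f: "f \<in> H2" and "0 < x"
  shows "integral {a..b} (\<lambda>y. (cmod (f (Complex x y)))\<^sup>2) \<le> pi * (H2_norm f)\<^sup>2"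
proof -
  have "ennreal (integral {a..b} (\<lambda>y. (cmod (f (Complex x y)))\<^sup>2))
      = (\<integral>\<^sup>+y\<in>{a..b}. ennreal ((cmod (f (Complex x y)))\<^sup>2) \<partial>lborel)"
    using \<open>0 < x\<close> by (intro set_nn_integral_interval_eq_integral[symmetric] continuous_intros
        H2_continuous_on_compose[OF f]) (auto simp: Complex_eq intro!: continuous_intros)
  also have "\<dots> \<le> (\<integral>\<^sup>+y. ennreal ((cmod (f (Complex x y)))\<^sup>2) \<partial>lborel)"
    by (intro nn_integral_mono) (simp add: indicator_def)
  also have "\<dots> \<le> ennreal (pi * (H2_norm f)\<^sup>2)"
    by (rule H2_line_integral_le[OF f \<open>0 < x\<close>])
  finally show ?thesis
    by (subst (asm) ennreal_le_iff) auto
qed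

lemma H2_rectangle_estimate:
  assumes f: "f \<in> H2" and "0 < h" "h < Re z" "h \<le> u"
  shows "ennreal (2 * pi * h * (cmod (f z))\<^sup>2) \<le>
      (\<integral>\<^sup>+x\<in>{Re z - h..Re z + h}. ennreal ((cmod (f (Complex x (Im z - u))))\<^sup>2) \<partial>lborel)
    + (\<integral>\<^sup>+x\<in>{Re z - h..Re z + h}. ennreal ((cmod (f (Complex x (Im z + u))))\<^sup>2) \<partial>lborel)
    + ennreal (2 * (pi * (H2_norm f)\<^sup>2))"
proof -
  let ?horizontal = "\<lambda>y. integral {Re z - h..Re z + h} (\<lambda>x. (cmod (f (Complex x y)))\<^sup>2)"
  have nonneg: "0 \<le> ?horizontal y" for y
    by (cases "(\<lambda>x. (cmod (f (Complex x y)))\<^sup>2) integrable_on {Re z - h..Re z + h}")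
      (simp_all add: integral_nonneg not_integrable_integral)
  have horizontal: "ennreal (?horizontal y) = (\<integral>\<^sup>+x\<in>{Re z - h..Re z + h}. ennreal ((cmod (f (Complex x y)))\<^sup>2) \<partial>lborel)"
    for y
    using assms by (intro set_nn_integral_interval_eq_integral[symmetric] continuous_intros
        H2_continuous_on_compose[OF f]) (auto simp: Complex_eq intro!: continuous_intros)
  have holo: "(\<lambda>w. (f w)\<^sup>2) holomorphic_on RHP"
    using f by (auto simp: H2_def intro: holomorphic_intros)
  have RHP: "convex RHP" "open RHP"
    by (simp_all add: RHP_def convex_halfspace_Re_gt open_halfspace_Re_gt)
  have "cbox (Complex (Re z - h) (Im z - u)) (Complex (Re z + h) (Im z + u)) \<subseteq> RHP"
    using assms by (auto simp: RHP_def in_cbox_complex_iff)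
  from Cauchy_rectangle_estimate[OF holo RHP this \<open>0 < h\<close>] assms
  have "2 * pi * h * (cmod (f z))\<^sup>2 \<le> ?horizontal (Im z - u) + ?horizontal (Im z + u)
      + integral {Im z - u..Im z + u} (\<lambda>y. (cmod (f (Complex (Re z - h) y)))\<^sup>2)
      + integral {Im z - u..Im z + u} (\<lambda>y. (cmod (f (Complex (Re z + h) y)))\<^sup>2)"
    by (simp add: norm_power)
  also have "\<dots> \<le> ?horizontal (Im z - u) + ?horizontal (Im z + u) + 2 * (pi * (H2_norm f)\<^sup>2)"
    using H2_vertical_segment_integral_le[OF f, of "Re z - h" "Im z - u" "Im z + u"]
      H2_vertical_segment_integral_le[OF f, of "Re z + h" "Im z - u" "Im z + u"] assms by auto
  finally have "ennreal (2 * pi * h * (cmod (f z))\<^sup>2)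
      \<le> ennreal (?horizontal (Im z - u)) + ennreal (?horizontal (Im z + u)) + ennreal (2 * (pi * (H2_norm f)\<^sup>2))"
    by (simp add: ennreal_leI nonneg flip: ennreal_plus)
  then show ?thesis
    by (simp only: horizontal)
qed

lemma H2_point_evaluation_sq_le:
  assumes f: "f \<in> H2" and h: "0 < h" "h < Re z"
  shows "h * (cmod (f z))\<^sup>2 \<le> 3 * (H2_norm f)\<^sup>2"
proof -
  define S where "S = (H2_norm f)\<^sup>2"
  define G where "G = (\<lambda>y. \<integral>\<^sup>+x\<in>{Re z - h..Re z + h}. ennreal ((cmod (f (Complex x y)))\<^sup>2) \<partial>lborel)"
  have G_measurable: "G \<in> borel_measurable borel"
    and G_integral: "(\<integral>\<^sup>+y. G y \<partial>lborel) \<le> ennreal (2 * h * (pi * S))"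
    using H2_strip_integral[OF f, of "Re z - h" "Re z + h"] h by (simp_all add: G_def S_def)
  have shifted: "(\<integral>\<^sup>+u. G (Im z - u) \<partial>lborel) = (\<integral>\<^sup>+y. G y \<partial>lborel)"
      "(\<integral>\<^sup>+u. G (Im z + u) \<partial>lborel) = (\<integral>\<^sup>+y. G y \<partial>lborel)"
    using nn_integral_real_affine[OF G_measurable, of "- 1" "Im z"]
      nn_integral_real_affine[OF G_measurable, of 1 "Im z"] by simp_all
  have shifted_measurable: "(\<lambda>u. G (Im z - u)) \<in> borel_measurable borel"
      "(\<lambda>u. G (Im z + u)) \<in> borel_measurable borel"
    using G_measurable by measurable
  have pointwise: "ennreal (2 * pi * h * (cmod (f z))\<^sup>2) * indicator {h..2 * h} u
      \<le> G (Im z - u) + G (Im z + u) + ennreal (2 * (pi * S)) * indicator {h..2 * h} u" for u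
    using H2_rectangle_estimate[OF f h, of u] by (auto simp: G_def S_def indicator_def)
  have "ennreal (2 * pi * h * (cmod (f z))\<^sup>2 * h)
      = (\<integral>\<^sup>+u. ennreal (2 * pi * h * (cmod (f z))\<^sup>2) * indicator {h..2 * h} u \<partial>lborel)"
    using h by (subst nn_integral_cmult_indicator) (auto simp: ennreal_mult)
  also have "\<dots> \<le> (\<integral>\<^sup>+u. G (Im z - u) + G (Im z + u) + ennreal (2 * (pi * S)) * indicator {h..2 * h} u \<partial>lborel)"
    by (rule nn_integral_mono) (rule pointwise)
  also have "\<dots> = (\<integral>\<^sup>+y. G y \<partial>lborel) + (\<integral>\<^sup>+y. G y \<partial>lborel) + ennreal (2 * (pi * S)) * ennreal h"
    using h shifted_measurable by (simp add: nn_integral_add shifted nn_integral_cmult_indicator)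
  also have "\<dots> \<le> ennreal (2 * h * (pi * S)) + ennreal (2 * h * (pi * S)) + ennreal (2 * (pi * S)) * ennreal h"
    using G_integral by (intro add_mono order_refl)
  finally have "ennreal (2 * pi * h * (cmod (f z))\<^sup>2 * h)
      \<le> ennreal (2 * h * (pi * S) + 2 * h * (pi * S) + 2 * (pi * S) * h)"
    using h by (simp add: S_def flip: ennreal_plus ennreal_mult)
  then have "(2 * pi * h) * (h * (cmod (f z))\<^sup>2) \<le> (2 * pi * h) * (3 * S)"
    using h by (subst (asm) ennreal_le_iff) (auto simp: S_def algebra_simps)
  then show ?thesis
    using h by (simp add: S_def)
qed

lemma H2_point_evaluation_bound:
  assumes f: "f \<in> H2" and "0 < Re z"
  shows "cmod (f z) \<le> sqrt (6 / Re z) * H2_norm f"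
proof -
  have "Re z / 2 * (cmod (f z))\<^sup>2 \<le> 3 * (H2_norm f)\<^sup>2"
    using assms by (intro H2_point_evaluation_sq_le) auto
  then have "(cmod (f z))\<^sup>2 \<le> 6 / Re z * (H2_norm f)\<^sup>2"
    using assms(2) by (simp add: field_simps)
  then have "cmod (f z) \<le> sqrt (6 / Re z * (H2_norm f)\<^sup>2)"
    by (rule real_le_rsqrt)
  also have "\<dots> = sqrt (6 / Re z) * H2_norm f"
    by (simp only: real_sqrt_mult real_sqrt_abs) (simp add: H2_norm_def)
  finally show ?thesis .
qed

theorem proposition4p1:
  fixes \<phi> :: "complex \<Rightarrow> complex" and \<eta> :: complex
  assumes "\<phi> holomorphic_on RHP"
    and "\<phi> ` RHP \<subseteq> RHP"
    and "\<eta> \<in> RHP" and "\<phi> \<eta> = \<eta>"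
    and "bounded_composition_H2 \<phi>"
  shows "\<not> positive_shadowing H2 H2_norm (\<lambda>f. f \<circ> \<phi>)"
proof (rule not_positive_shadowing_if_invariant_functional[where L = "\<lambda>f. f \<eta>"])
  have \<eta>: "0 < Re \<eta>"
    using assms(3) by (simp add: RHP_def)
  show "f \<circ> \<phi> \<in> H2" if "f \<in> H2" for f
    using assms(5) that unfolding bounded_composition_H2_def by blast
  show "cmod (f \<eta>) \<le> sqrt (6 / Re \<eta>)" if "f \<in> H2" "H2_norm f \<le> 1" for f
  proof -
    have "cmod (f \<eta>) \<le> sqrt (6 / Re \<eta>) * H2_norm f"
      by (rule H2_point_evaluation_bound[OF that(1) \<eta>])
    also have "\<dots> \<le> sqrt (6 / Re \<eta>)"
      using that(2) \<eta> by (intro mult_left_le) auto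
    finally show ?thesis .
  qed
  show "\<exists>v\<in>H2. H2_norm v \<le> \<delta> \<and> v \<eta> \<noteq> 0" if "0 < \<delta>" for \<delta>
    using H2_small_nonvanishing[OF that \<eta>] .
qed (simp_all add: zero_in_H2 H2_diff assms(4))

end
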